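(* Let $A,B\subseteq\Sigma^+$, $A'\subseteq A$ and $B'\subseteq B$. If $\langle A,B\rangle$ has a deduction tree of size $k$, then $\langle A',B'\rangle$ has a deduction tree of size $k$.
   Context: Let $AP$ be a finite set of atomic propositions and $\Sigma=2^{AP}$. For $\sigma=w_0\cdots w_m\in\Sigma^+$ and $j\le m$, $\sigma^{(j)}=w_j\cdots w_m$. For $A\subseteq\Sigma^+$: $A^{\mathsf X}=\{\sigma^{(1)}:\sigma\in A,|\sigma|\ge2\}$; $A^{\mathsf G}=\{\sigma^{(j)}:\sigma\in A,0\le j<|\sigma|\}$; a future point for $A$ is $f:A\to\mathbb N$ with $f(\sigma)<|\sigma|$ for all $\sigma$, and $A^f=\{\sigma^{(f(\sigma))}:\sigma\in A\}$. For a literal $\alpha\in\{p,\neg p: p\in AP\}$, $A\models\alpha$ means $\alpha$ holds at position $0$ of every trace in $A$ and $B\perp\alpha$ means it fails at position $0$ of every trace in $B$. Proof system on terms $\langle A,B\rangle$ ($A,B\subseteq\Sigma^+$): Atomic: $\langle A,B\rangle$ if $A\models\alpha$ and $B\perp\alpha$ for some literal $\alpha$; Or: $\langle A_1\uplus A_2,B\rangle$ from $\langle A_1,B\rangle,\langle A_2,B\rangle$; And: $\langle A,B_1\uplus B_2\rangle$ from $\langle A,B_1\rangle,\langle A,B_2\rangle$; Next: $\langle A,B\rangle$ from $\langle A^{\mathsf X},B^{\mathsf X}\rangle$ if $|A^{\mathsf X}|=|A|$; WeakNext: $\langle A,B\rangle$ from $\langle A^{\mathsf X},B^{\mathsf X}\rangle$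 if $|B^{\mathsf X}|=|B|$; Future: $\langle A,B\rangle$ from $\langle A^f,B^{\mathsf G}\rangle$ for a future point $f$ for $A$; Globally: $\langle A,B\rangle$ from $\langle A^{\mathsf G},B^f\rangle$ for a future point $f$ for $B$ ($\uplus$ = disjoint union). A deduction tree for $\langle A,B\rangle$ is a finite tree of rule applications with root conclusion $\langle A,B\rangle$ in which every hypothesis is derived by a rule application; its size is its number of rule applications. *)

theory Defs
  imports Main
begin

text \<open>Traces over \<Sigma> = 2^AP are lists of sets of atomic propositions; the
  atomic propositions form a finite type 'ap. Elements of \<Sigma>^+ are the
  nonempty lists.\<close>

type_synonym 'ap trace = "'ap set list"

definition nonempty_traces :: "'ap trace set \<Rightarrow> bool" where
  "nonempty_traces A \<longleftrightarrow> (\<forall>\<sigma>\<in>A. \<sigma> \<noteq> [])"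

text \<open>sigma^(j) = drop j sigma\<close>
definition nextS :: "'ap trace set \<Rightarrow> 'ap trace set" where
  "nextS A = {drop 1 \<sigma> | \<sigma>. \<sigma> \<in> A \<and> length \<sigma> \<ge> 2}"

definition globS :: "'ap trace set \<Rightarrow> 'ap trace set" where
  "globS A = {drop j \<sigma> | \<sigma> j. \<sigma> \<in> A \<and> j < length \<sigma>}"

definition future_point :: "'ap trace set \<Rightarrow> ('ap trace \<Rightarrow> nat) \<Rightarrow> bool" where
  "future_point A f \<longleftrightarrow> (\<forall>\<sigma>\<in>A. f \<sigma> < length \<sigma>)"

definition futS :: "'ap trace set \<Rightarrow> ('ap trace \<Rightarrow> nat) \<Rightarrow> 'ap trace set" where
  "futS A f = (\<lambda>\<sigma>. drop (f \<sigma>) \<sigma>) ` A"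

datatype 'ap literal = Pos 'ap | Neg 'ap

fun holds0 :: "'ap trace \<Rightarrow> 'ap literal \<Rightarrow> bool" where
  "holds0 \<sigma> (Pos p) \<longleftrightarrow> p \<in> \<sigma> ! 0"
| "holds0 \<sigma> (Neg p) \<longleftrightarrow> p \<notin> \<sigma> ! 0"

definition models :: "'ap trace set \<Rightarrow> 'ap literal \<Rightarrow> bool" where
  "models A \<alpha> \<longleftrightarrow> (\<forall>\<sigma>\<in>A. holds0 \<sigma> \<alpha>)"

definition perp :: "'ap trace set \<Rightarrow> 'ap literal \<Rightarrow> bool" where
  "perp B \<alpha> \<longleftrightarrow> (\<forall>\<sigma>\<in>B. \<not> holds0 \<sigma> \<alpha>)"

inductive has_tree :: "('ap::finite) trace set \<Rightarrow> 'ap trace set \<Rightarrow> nat \<Rightarrow> bool" where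
  Atomic: "models A \<alpha> \<Longrightarrow> perp B \<alpha> \<Longrightarrow> has_tree A B 1"
| Or: "A1 \<inter> A2 = {} \<Longrightarrow> has_tree A1 B k1 \<Longrightarrow> has_tree A2 B k2
         \<Longrightarrow> has_tree (A1 \<union> A2) B (k1 + k2 + 1)"
| And: "B1 \<inter> B2 = {} \<Longrightarrow> has_tree A B1 k1 \<Longrightarrow> has_tree A B2 k2
         \<Longrightarrow> has_tree A (B1 \<union> B2) (k1 + k2 + 1)"
| Next: "card (nextS A) = card A \<Longrightarrow> has_tree (nextS A) (nextS B) k
         \<Longrightarrow> has_tree A B (k + 1)"
| WeakNext: "card (nextS B) = card B \<Longrightarrow> has_tree (nextS A) (nextS B) k
         \<Longrightarrow> has_tree A B (k + 1)"
| Future: "future_point A f \<Longrightarrow> has_tree (futS A f) (globS B) k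
         \<Longrightarrow> has_tree A B (k + 1)"
| Globally: "future_point B f \<Longrightarrow> has_tree (globS A) (futS B f) k
         \<Longrightarrow> has_tree A B (k + 1)"

end

theory Submission
  imports Defs
begin

text \<open>Each rule stays applicable after shrinking both sets of its conclusion: the
  premises of Or and And are restricted along the given partition, the operators X, G and f
  are monotone, and the side conditions pass to subsets. For Next and WeakNext this is because,
  on finite sets, the cardinality condition says that all traces have length at least two and
  that dropping the first letter is injective. Finiteness is needed only for that reason.\<close>

lemma nextS_eq_image: "nextS A = drop 1 ` {\<sigma>\<in>A. 2 \<le> length \<sigma>}"
  unfolding nextS_def by auto

lemma nextS_mono: "A' \<subseteq> A \<Longrightarrow> nextS A' \<subseteq> nextS A"
  unfolding nextS_def by auto

lemma globS_mono: "A' \<subseteq> A \<Longrightarrow> globS A' \<subseteq> globS A"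
  unfolding globS_def by auto

lemma futS_mono: "A' \<subseteq> A \<Longrightarrow> futS A' f \<subseteq> futS A f"
  unfolding futS_def by auto

lemma finite_nextS: "finite A \<Longrightarrow> finite (nextS A)"
  unfolding nextS_eq_image by simp

lemma finite_futS: "finite A \<Longrightarrow> finite (futS A f)"
  unfolding futS_def by simp

lemma finite_globS:
  assumes "finite A"
  shows "finite (globS A)"
proof -
  have "globS A = (\<lambda>(\<sigma>, j). drop j \<sigma>) ` (SIGMA \<sigma>:A. {..<length \<sigma>})"
    unfolding globS_def by auto
  then show ?thesis
    using assms by simp
qed

lemma future_point_subset: "future_point A f \<Longrightarrow> A' \<subseteq> A \<Longrightarrow> future_point A' f"
  unfolding future_point_def by blast

lemma card_nextS_eq_iff:
  assumes "finite A"
  shows "card (nextS A) = card A \<longleftrightarrow> (\<forall>\<sigma>\<in>A. 2 \<le> length \<sigma>) \<and> inj_on (drop 1) A"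
proof
  let ?L = "{\<sigma>\<in>A. 2 \<le> length \<sigma>}"
  assume card_eq: "card (nextS A) = card A"
  have "card A \<le> card ?L"
    using card_eq card_image_le[of ?L "drop 1"] assms unfolding nextS_eq_image by simp
  moreover have "card ?L \<le> card A"
    using assms by (intro card_mono) auto
  ultimately have all_long: "?L = A"
    using assms by (intro card_subset_eq) auto
  then have "inj_on (drop 1) A"
    using card_eq by (intro eq_card_imp_inj_on[OF assms]) (simp add: nextS_eq_image)
  with all_long show "(\<forall>\<sigma>\<in>A. 2 \<le> length \<sigma>) \<and> inj_on (drop 1) A"
    by blast
next
  assume "(\<forall>\<sigma>\<in>A. 2 \<le> length \<sigma>) \<and> inj_on (drop 1) A"
  moreover from this have "{\<sigma>\<in>A. 2 \<le> length \<sigma>} = A"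
    by blast
  ultimately show "card (nextS A) = card A"
    unfolding nextS_eq_image by (simp add: card_image)
qed

lemma card_nextS_eq_subset:
  assumes "finite A" and "card (nextS A) = card A" and "A' \<subseteq> A"
  shows "card (nextS A') = card A'"
proof -
  have "finite A'"
    using assms(1,3) by (rule finite_subset[rotated])
  moreover have "(\<forall>\<sigma>\<in>A'. 2 \<le> length \<sigma>) \<and> inj_on (drop 1) A'"
    using assms card_nextS_eq_iff[OF assms(1)] inj_on_subset by blast
  ultimately show ?thesis
    using card_nextS_eq_iff by blast
qed

lemma has_tree_subset:
  assumes "has_tree A B k" and "finite A" and "finite B" and "A' \<subseteq> A" and "B' \<subseteq> B"
  shows "has_tree A' B' k"
  using assms
proof (induction arbitrary: A' B' rule: has_tree.induct)
  case (Atomic A \<alpha> B)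
  then have "models A' \<alpha>" and "perp B' \<alpha>"
    unfolding models_def perp_def by blast+
  then show ?case
    by (rule has_tree.Atomic)
next
  case (Or A1 A2 B k1 k2)
  have "has_tree (A' \<inter> A1) B' k1" and "has_tree (A' \<inter> A2) B' k2"
    using Or.prems by (auto intro: Or.IH)
  then have "has_tree ((A' \<inter> A1) \<union> (A' \<inter> A2)) B' (k1 + k2 + 1)"
    using Or.hyps(1) by (intro has_tree.Or) auto
  moreover have "(A' \<inter> A1) \<union> (A' \<inter> A2) = A'"
    using Or.prems(3) by auto
  ultimately show ?case
    by simp
next
  case (And B1 B2 A k1 k2)
  have "has_tree A' (B' \<inter> B1) k1" and "has_tree A' (B' \<inter> B2) k2"
    using And.prems by (auto intro: And.IH)
  then have "has_tree A' ((B' \<inter> B1) \<union> (B' \<inter> B2)) (k1 + k2 + 1)"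
    using And.hyps(1) by (intro has_tree.And) auto
  moreover have "(B' \<inter> B1) \<union> (B' \<inter> B2) = B'"
    using And.prems(4) by auto
  ultimately show ?case
    by simp
next
  case (Next A B k)
  have "has_tree (nextS A') (nextS B') k"
    using Next.prems by (auto intro!: Next.IH finite_nextS nextS_mono)
  moreover have "card (nextS A') = card A'"
    using Next.prems(1) Next.hyps(1) Next.prems(3) by (rule card_nextS_eq_subset)
  ultimately show ?case
    by (intro has_tree.Next)
next
  case (WeakNext B A k)
  have "has_tree (nextS A') (nextS B') k"
    using WeakNext.prems by (auto intro!: WeakNext.IH finite_nextS nextS_mono)
  moreover have "card (nextS B') = card B'"
    using WeakNext.prems(2) WeakNext.hyps(1) WeakNext.prems(4) by (rule card_nextS_eq_subset)
  ultimately show ?case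
    by (intro has_tree.WeakNext)
next
  case (Future A f B k)
  have "has_tree (futS A' f) (globS B') k"
    using Future.prems by (auto intro!: Future.IH finite_futS finite_globS futS_mono globS_mono)
  moreover have "future_point A' f"
    using Future.hyps(1) Future.prems(3) by (rule future_point_subset)
  ultimately show ?case
    by (intro has_tree.Future)
next
  case (Globally B f A k)
  have "has_tree (globS A') (futS B' f) k"
    using Globally.prems by (auto intro!: Globally.IH finite_futS finite_globS futS_mono globS_mono)
  moreover have "future_point B' f"
    using Globally.hyps(1) Globally.prems(4) by (rule future_point_subset)
  ultimately show ?case
    by (intro has_tree.Globally)
qed

theorem lemma10:
  fixes A B A' B' :: "('ap::finite) trace set" and k :: nat
  assumes "finite A" and "finite B"
    and "nonempty_traces A" and "nonempty_traces B"
    and "A' \<subseteq> A" and "B' \<subseteq> B"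
    and "has_tree A B k"
  shows "has_tree A' B' k"
  using assms(7,1,2,5,6) by (rule has_tree_subset)

end
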